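(* Let $a,a^{+}$ be boson operators with $aa^{+}-a^{+}a=1$, let $m\in\mathbb{N}$ and let $\lambda$ be a nonzero real number. For all integers $l,n\ge0$, \[ (m\,a^{+}a+1)_{l+n,\lambda}=\sum_{j=0}^{l}W_{m,\lambda}(l,j)\,m^{j}(a^{+})^{j}\,(m\,a^{+}a+1+mj-l\lambda)_{n,\lambda}\,a^{j}. \]
   Context: For an operator or number $X$ and real $\lambda\neq0$, $(X)_{0,\lambda}=1$ and $(X)_{n,\lambda}=X(X-\lambda)\cdots(X-(n-1)\lambda)$ for $n\ge1$ (scalars mean multiples of the identity). For $m\in\mathbb{N}$, the degenerate Whitney numbers of the second kind $W_{m,\lambda}(n,k)$ are defined by $(mx+1)_{n,\lambda}=\sum_{k=0}^{n}W_{m,\lambda}(n,k)m^{k}(x)_k$ for $n\ge0$, where $(x)_k=x(x-1)\cdots(x-k+1)$. *)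

theory Defs
  imports Complex_Main
begin

fun deg_ff :: "'a::real_algebra_1 \<Rightarrow> real \<Rightarrow> nat \<Rightarrow> 'a" where
  "deg_ff X lam 0 = 1"
| "deg_ff X lam (Suc n) = deg_ff X lam n * (X - of_real (real n * lam))"

definition falling :: "real \<Rightarrow> nat \<Rightarrow> real" where
  "falling x k = (\<Prod>i<k. x - real i)"

text \<open>Degenerate Whitney numbers of the second kind, defined as the coefficients in
  (m x + 1)_{n,lambda} = sum_{k=0}^n W(n,k) m^k (x)_k  (for k > n we set W = 0).\<close>
definition deg_whitney2 :: "nat \<Rightarrow> real \<Rightarrow> nat \<Rightarrow> nat \<Rightarrow> real" where
  "deg_whitney2 m lam n k =
     (if k \<le> n then
        (THE c. \<exists>w :: nat \<Rightarrow> real.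
            (\<forall>x::real. deg_ff (real m * x + 1) lam n
                        = (\<Sum>j\<le>n. w j * real m ^ j * falling x j)) \<and> c = w k)
      else 0)"

end

theory Submission
  imports Defs
begin

(* Peeling one factor off (m a+a + r)_{n+1,lam}
   from the left and using a f(a+a) = f(a+a + 1) a splits each normally ordered term
   a+^j (...)_{n,lam} a^j into two, which is exactly the triangular recurrence
   W(l+1,k) = W(l,k-1) + (mk + 1 - l lam) W(l,k). The coefficients of (mx+1)_{l,lam} in the basis
   m^k (x)_k satisfy the same recurrence, and they are unique (this needs m >= 1) because
   (i)_k = 0 for k > i while (i)_i <> 0. *)

lemma mult_of_real_commute: "of_real r * (x :: 'a::real_algebra_1) = x * of_real r"
  by (simp add: of_real_def)

fun whitney_rec :: "nat \<Rightarrow> real \<Rightarrow> nat \<Rightarrow> nat \<Rightarrow> real" where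
  "whitney_rec m lam 0 k = (if k = 0 then 1 else 0)"
| "whitney_rec m lam (Suc n) k = (if k = 0 then 0 else whitney_rec m lam n (k - 1))
     + (real m * real k + 1 - real n * lam) * whitney_rec m lam n k"

lemma whitney_rec_eq_0: "n < k \<Longrightarrow> whitney_rec m lam n k = 0"
  by (induction n arbitrary: k) auto

lemma sum_whitney_rec_Suc:
  fixes g :: "nat \<Rightarrow> 'a::real_algebra_1"
  shows "(\<Sum>j\<le>Suc n. of_real (whitney_rec m lam (Suc n) j) * g j)
       = (\<Sum>j\<le>n. of_real (whitney_rec m lam n j)
                   * (g (Suc j) + of_real (real m * real j + 1 - real n * lam) * g j))"
proof -
  let ?c = "\<lambda>j. real m * real j + 1 - real n * lam"
  have "(\<Sum>j\<le>Suc n. of_real (whitney_rec m lam (Suc n) j) * g j)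
     = (\<Sum>j\<le>Suc n. of_real (if j = 0 then 0 else whitney_rec m lam n (j - 1)) * g j)
     + (\<Sum>j\<le>Suc n. of_real (?c j * whitney_rec m lam n j) * g j)"
    by (simp only: whitney_rec.simps of_real_add distrib_right sum.distrib)
  also have "(\<Sum>j\<le>Suc n. of_real (if j = 0 then 0 else whitney_rec m lam n (j - 1)) * g j)
      = (\<Sum>j\<le>n. of_real (whitney_rec m lam n j) * g (Suc j))"
    by (subst sum.atMost_Suc_shift) simp
  also have "(\<Sum>j\<le>Suc n. of_real (?c j * whitney_rec m lam n j) * g j)
      = (\<Sum>j\<le>n. of_real (whitney_rec m lam n j) * (of_real (?c j) * g j))"
    by (simp add: whitney_rec_eq_0 mult.assoc mult.commute)
  finally show ?thesis by (simp add: sum.distrib distrib_left)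
qed

lemma falling_Suc: "falling x (Suc j) = falling x j * (x - real j)"
  by (simp add: falling_def)

lemma falling_of_nat_eq_0: "i < j \<Longrightarrow> falling (real i) j = 0"
  unfolding falling_def by (rule prod_zero) auto

lemma falling_of_nat_self_neq_0: "falling (real i) i \<noteq> 0"
  unfolding falling_def by (auto simp: prod_zero_iff)

lemma deg_ff_affine_eq_sum_falling:
  "deg_ff (real m * x + 1) lam n = (\<Sum>j\<le>n. whitney_rec m lam n j * real m ^ j * falling x j)"
proof (induction n)
  case 0
  then show ?case by (simp add: falling_def)
next
  case (Suc n)
  have "(\<Sum>j\<le>Suc n. whitney_rec m lam (Suc n) j * real m ^ j * falling x j)
    = (\<Sum>j\<le>n. whitney_rec m lam n j * (real m ^ Suc j * falling x (Suc j)
        + (real m * real j + 1 - real n * lam) * (real m ^ j * falling x j)))"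
    using sum_whitney_rec_Suc[of m lam n "\<lambda>j. real m ^ j * falling x j"] by (simp add: mult.assoc)
  also have "\<dots> = (\<Sum>j\<le>n. whitney_rec m lam n j * real m ^ j * falling x j)
                 * (real m * x + 1 - real n * lam)"
    unfolding sum_distrib_right by (intro sum.cong refl) (simp add: falling_Suc algebra_simps)
  finally show ?case using Suc by simp
qed

lemma falling_coeffs_unique:
  assumes zero: "\<forall>x. (\<Sum>j\<le>n. c j * falling x j) = 0" and "i \<le> n"
  shows "c i = 0"
  using \<open>i \<le> n\<close>
proof (induction i rule: less_induct)
  case (less i)
  have "0 = (\<Sum>j\<le>n. c j * falling (real i) j)"
    using zero by simp
  also have "\<dots> = c i * falling (real i) i + (\<Sum>j\<in>{..n} - {i}. c j * falling (real i) j)"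
    using less by (intro sum.remove) auto
  also have "(\<Sum>j\<in>{..n} - {i}. c j * falling (real i) j) = 0"
    using less by (intro sum.neutral) (auto simp: falling_of_nat_eq_0 linorder_neq_iff)
  finally show ?case
    using falling_of_nat_self_neq_0[of i] by simp
qed

lemma deg_whitney2_eq_whitney_rec:
  assumes "m \<ge> 1" and "k \<le> n"
  shows "deg_whitney2 m lam n k = whitney_rec m lam n k"
proof -
  let ?expands = "\<lambda>w. \<forall>x. deg_ff (real m * x + 1) lam n = (\<Sum>j\<le>n. w j * real m ^ j * falling x j)"
  have "(THE c. \<exists>w. ?expands w \<and> c = w k) = whitney_rec m lam n k"
  proof (rule the_equality)
    show "\<exists>w. ?expands w \<and> whitney_rec m lam n k = w k"
      using deg_ff_affine_eq_sum_falling by blast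
  next
    fix c assume "\<exists>w. ?expands w \<and> c = w k"
    then obtain w where "?expands w" and "c = w k" by blast
    then have "\<forall>x. (\<Sum>j\<le>n. ((w j - whitney_rec m lam n j) * real m ^ j) * falling x j) = 0"
      using deg_ff_affine_eq_sum_falling by (simp add: algebra_simps sum_subtractf)
    from falling_coeffs_unique[OF this \<open>k \<le> n\<close>] \<open>m \<ge> 1\<close> \<open>c = w k\<close>
    show "c = whitney_rec m lam n k" by simp
  qed
  with \<open>k \<le> n\<close> show ?thesis by (simp add: deg_whitney2_def)
qed

lemma deg_ff_Suc_left: "deg_ff (Y :: 'a::real_algebra_1) lam (Suc n) = Y * deg_ff (Y - of_real lam) lam n"
proof (induction n)
  case 0
  then show ?case by simp
next
  case (Suc n)
  have "deg_ff Y lam (Suc (Suc n))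
      = Y * deg_ff (Y - of_real lam) lam n * (Y - of_real (real (Suc n) * lam))"
    using Suc by simp
  also have "Y - of_real (real (Suc n) * lam) = (Y - of_real lam) - of_real (real n * lam)"
    by (simp add: algebra_simps)
  finally show ?case by (simp add: mult.assoc)
qed

lemma deg_ff_intertwine:
  fixes a y :: "'a::real_algebra_1"
  assumes "a * y = (y + of_real c) * a"
  shows "a * deg_ff y lam n = deg_ff (y + of_real c) lam n * a"
proof (induction n)
  case 0
  then show ?case by simp
next
  case (Suc n)
  have factor: "a * (y - of_real s) = (y + of_real c - of_real s) * a" for s
    using assms by (simp add: algebra_simps mult_of_real_commute)
  have "a * deg_ff y lam (Suc n) = deg_ff (y + of_real c) lam n * (a * (y - of_real (real n * lam)))"
    using Suc by (simp flip: mult.assoc)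
  also have "\<dots> = deg_ff (y + of_real c) lam (Suc n) * a"
    by (simp only: factor deg_ff.simps mult.assoc)
  finally show ?case .
qed

lemma boson_number_intertwine:
  fixes a ad :: "'a::real_algebra_1"
  assumes "a * ad - ad * a = 1"
  shows "a * (of_nat m * ad * a + of_real r) = (of_nat m * ad * a + of_real r + of_real (real m)) * a"
proof -
  have "a * ad = 1 + ad * a"
    using assms by (simp add: algebra_simps)
  then have "a * (of_nat m * ad * a) = of_nat m * a + of_nat m * ad * a * a"
    by (simp add: mult.assoc mult_of_nat_commute algebra_simps flip: mult.assoc[of a ad])
  then show ?thesis
    by (simp add: algebra_simps mult_of_real_commute mult_of_nat_commute)
qed

definition normal_term :: "nat \<Rightarrow> 'a \<Rightarrow> 'a \<Rightarrow> real \<Rightarrow> nat \<Rightarrow> real \<Rightarrow> nat \<Rightarrow> 'a::real_algebra_1" where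
  "normal_term m ad a lam j r n =
     of_real (real m ^ j) * ad ^ j * deg_ff (of_nat m * ad * a + of_real r) lam n * a ^ j"

lemma normal_term_Suc:
  fixes a ad :: "'a::real_algebra_1"
  assumes boson: "a * ad - ad * a = 1"
  shows "normal_term m ad a lam j r (Suc n)
       = normal_term m ad a lam (Suc j) (r - lam + real m) n
       + of_real r * normal_term m ad a lam j (r - lam) n"
proof -
  define B where "B = of_nat m * ad * a"
  define E where "E = deg_ff (B + of_real (r - lam)) lam n"
  define E' where "E' = deg_ff (B + of_real (r - lam + real m)) lam n"
  have "a * E = deg_ff (B + of_real (r - lam) + of_real (real m)) lam n * a"
    unfolding E_def B_def by (rule deg_ff_intertwine[OF boson_number_intertwine[OF boson]])
  then have aE: "a * E = E' * a"
    by (simp add: E'_def add.assoc)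
  have adB: "ad ^ j * B = of_nat m * ad ^ Suc j * a"
  proof -
    have "ad ^ j * B = of_nat m * (ad ^ j * ad) * a"
      unfolding B_def by (simp add: mult.assoc mult_of_nat_commute)
    then show ?thesis by (simp only: power_Suc2)
  qed
  have "deg_ff (B + of_real r) lam (Suc n) = (B + of_real r) * E"
    unfolding E_def deg_ff_Suc_left by (simp add: algebra_simps)
  then have "normal_term m ad a lam j r (Suc n)
     = of_real (real m ^ j) * (ad ^ j * B) * E * a ^ j
       + of_real r * (of_real (real m ^ j) * ad ^ j * E * a ^ j)"
    unfolding normal_term_def B_def[symmetric] by (simp add: algebra_simps mult_of_real_commute)
  also have "of_real (real m ^ j) * (ad ^ j * B) * E * a ^ j
     = of_real (real m ^ j) * of_nat m * ad ^ Suc j * (a * E) * a ^ j"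
    by (simp add: adB mult.assoc)
  also have "\<dots> = of_real (real m ^ Suc j) * ad ^ Suc j * E' * a ^ Suc j"
    by (simp add: aE mult.assoc) (metis mult.assoc power_Suc power_Suc2)
  finally show ?thesis
    unfolding normal_term_def B_def E_def E'_def .
qed

lemma deg_ff_number_normal_ordered:
  fixes a ad :: "'a::real_algebra_1"
  assumes boson: "a * ad - ad * a = 1"
  shows "deg_ff (of_nat m * ad * a + 1) lam (l + n)
       = (\<Sum>j\<le>l. of_real (whitney_rec m lam l j)
                   * normal_term m ad a lam j (real m * real j + 1 - real l * lam) n)"
proof (induction l arbitrary: n)
  case 0
  then show ?case by (simp add: normal_term_def)
next
  case (Suc l)
  let ?T = "\<lambda>j. normal_term m ad a lam j (real m * real j + 1 - real (Suc l) * lam) n"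
  have split: "normal_term m ad a lam j (real m * real j + 1 - real l * lam) (Suc n)
      = ?T (Suc j) + of_real (real m * real j + 1 - real l * lam) * ?T j" for j
    unfolding normal_term_Suc[OF boson] by (simp add: algebra_simps)
  have "deg_ff (of_nat m * ad * a + 1) lam (Suc l + n) = deg_ff (of_nat m * ad * a + 1) lam (l + Suc n)"
    by simp
  also have "\<dots> = (\<Sum>j\<le>l. of_real (whitney_rec m lam l j)
                   * (?T (Suc j) + of_real (real m * real j + 1 - real l * lam) * ?T j))"
    unfolding Suc split ..
  also have "\<dots> = (\<Sum>j\<le>Suc l. of_real (whitney_rec m lam (Suc l) j) * ?T j)"
    by (rule sum_whitney_rec_Suc[symmetric])
  finally show ?case .
qed

theorem mainTheorem6:
  fixes a ad :: "'a::real_algebra_1" and m :: nat and lam :: real and l n :: nat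
  assumes boson: "a * ad - ad * a = 1"
    and m_pos: "m \<ge> 1"
    and lam_nz: "lam \<noteq> 0"
  shows "deg_ff (of_nat m * ad * a + 1) lam (l + n)
       = (\<Sum>j\<le>l. of_real (deg_whitney2 m lam l j * real m ^ j) * ad ^ j
            * deg_ff (of_nat m * ad * a + 1 + of_nat (m * j) - of_real (real l * lam)) lam n
            * a ^ j)"
  unfolding deg_ff_number_normal_ordered[OF boson]
proof (intro sum.cong refl)
  fix j assume "j \<in> {..l}"
  have "of_nat m * ad * a + of_real (real m * real j + 1 - real l * lam)
      = of_nat m * ad * a + 1 + of_nat (m * j) - (of_real (real l * lam) :: 'a)"
    by (simp add: algebra_simps)
  then show "of_real (whitney_rec m lam l j)
        * normal_term m ad a lam j (real m * real j + 1 - real l * lam) n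
      = of_real (deg_whitney2 m lam l j * real m ^ j) * ad ^ j
        * deg_ff (of_nat m * ad * a + 1 + of_nat (m * j) - of_real (real l * lam)) lam n * a ^ j"
    using \<open>j \<in> {..l}\<close> m_pos
    by (simp only: normal_term_def deg_whitney2_eq_whitney_rec atMost_iff of_real_mult mult.assoc)
qed

end
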